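(* Let $A$ be a positive $2\times 2$ matrix that is not doubly stochastic. If the column scaled matrix $A\,Y(A)$ is doubly stochastic, then $A$ is of the form $A=\begin{pmatrix} a & ct\\ c & at\end{pmatrix}$ for some positive reals $a,c,t$, and \[ S(A)=A\,Y(A)=\begin{pmatrix} a/(a+c) & c/(a+c)\\ c/(a+c) & a/(a+c)\end{pmatrix}. \] If the row scaled matrix $X(A)\,A$ is doubly stochastic, then $A$ is of the form $A=\begin{pmatrix} a & b\\ bt & at\end{pmatrix}$ for some positive reals $a,b,t$, and \[ S(A)=X(A)\,A=\begin{pmatrix} a/(a+b) & b/(a+b)\\ b/(a+b) & a/(a+b)\end{pmatrix}. \]
   Context: A positive matrix has all entries positive. For an $n\times n$ matrix $A=(a_{i,j})$ let $\mathrm{row}_i(A)=\sum_j a_{i,j}$ and $\mathrm{col}_j(A)=\sum_i a_{i,j}$; $A$ is doubly stochastic if all row and column sums equal $1$. For positive $A$ let $X(A)=\mathrm{diag}(1/\mathrm{row}_1(A),\ldots,1/\mathrm{row}_n(A))$ (row scaling: $X(A)A$) and $Y(A)=\mathrm{diag}(1/\mathrm{col}_1(A),\ldots,1/\mathrm{col}_n(A))$ (column scaling: $AY(A)$). The alternate minimization sequence of $A$ is $A^{(0)}=A$, $A^{(2k+1)}=A^{(2k)}\,Y(A^{(2k)})$, $A^{(2k+2)}=X(A^{(2k+1)})\,A^{(2k+1)}$ ($k\ge 0$); its limit $S(A)=\lim_{\ell\to\infty}A^{(\ell)}$ is the alternate minimization (Sinkhorn) limit of $A$. *)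

theory Defs
  imports "HOL-Analysis.Analysis"
begin

definition positive_matrix :: "real^'n^'n \<Rightarrow> bool" where
  "positive_matrix A \<longleftrightarrow> (\<forall>i j. A $ i $ j > 0)"

definition row_sum :: "real^'n^'n \<Rightarrow> 'n \<Rightarrow> real" where
  "row_sum A i = (\<Sum>j\<in>UNIV. A $ i $ j)"

definition col_sum :: "real^'n^'n \<Rightarrow> 'n \<Rightarrow> real" where
  "col_sum A j = (\<Sum>i\<in>UNIV. A $ i $ j)"

definition doubly_stochastic :: "real^'n^'n \<Rightarrow> bool" where
  "doubly_stochastic A \<longleftrightarrow> (\<forall>i. row_sum A i = 1) \<and> (\<forall>j. col_sum A j = 1)"

definition diag_mat :: "('n \<Rightarrow> real) \<Rightarrow> real^'n^'n" where
  "diag_mat d = (\<chi> i j. if i = j then d i else 0)"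

definition Xs :: "real^'n^'n \<Rightarrow> real^'n^'n" where
  "Xs A = diag_mat (\<lambda>i. 1 / row_sum A i)"

definition Ys :: "real^'n^'n \<Rightarrow> real^'n^'n" where
  "Ys A = diag_mat (\<lambda>j. 1 / col_sum A j)"

fun alt_min_seq :: "real^'n^'n \<Rightarrow> nat \<Rightarrow> real^'n^'n" where
  "alt_min_seq A 0 = A"
| "alt_min_seq A (Suc l) =
     (let B = alt_min_seq A l in if even l then B ** Ys B else Xs B ** B)"

definition sinkhorn_limit :: "real^'n^'n \<Rightarrow> real^'n^'n" where
  "sinkhorn_limit A = lim (alt_min_seq A)"

end

theory Submission
  imports Defs
begin

text \<open>Let \<open>M\<close> be the symmetric matrix with diagonal \<open>a\<close> and off-diagonal \<open>b\<close>. Column scaling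
  of \<open>diag(1,v) M diag(1,u)\<close> forgets \<open>u\<close> and gives a matrix of the same shape, with \<open>M\<close> rescaled
  and new right ratio \<open>(a + b v) / (b + a v)\<close>; row scaling acts symmetrically. So the alternate
  minimization sequence stays in two explicit one-parameter families whose parameter is iterated
  by the Moebius map \<open>r \<mapsto> (a + b r) / (b + a r)\<close>. In the coordinate \<open>(1 - r) / (1 + r)\<close> this map
  is multiplication by \<open>(b - a) / (a + b)\<close>, of modulus less than one, so the parameter tends
  to \<open>1\<close> and the sequence tends to \<open>M / (a + b)\<close>. Every positive matrix has the shape
  \<open>diag(1,v) M diag(1,u)\<close>; that \<open>A Y(A)\<close>, resp. \<open>X(A) A\<close>, is doubly stochastic means \<open>v = 1\<close>,
  resp. \<open>u = 1\<close>, and then this first scaling already reaches the limit.\<close>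

definition mat2 :: "real \<Rightarrow> real \<Rightarrow> real \<Rightarrow> real \<Rightarrow> real^2^2" where
  "mat2 p q r s = (\<chi> i j. if i = 1 then (if j = 1 then p else q) else (if j = 1 then r else s))"

lemma mat2_nth [simp]:
  "mat2 p q r s $ 1 $ 1 = p" "mat2 p q r s $ 1 $ 2 = q"
  "mat2 p q r s $ 2 $ 1 = r" "mat2 p q r s $ 2 $ 2 = s"
  by (simp_all add: mat2_def)

lemma mat2_eq_iff:
  "(M::real^2^2) = N \<longleftrightarrow> M$1$1 = N$1$1 \<and> M$1$2 = N$1$2 \<and> M$2$1 = N$2$1 \<and> M$2$2 = N$2$2"
  by (auto simp: vec_eq_iff forall_2)

lemma tendsto_mat2:
  assumes "(p \<longlongrightarrow> p0) F" "(q \<longlongrightarrow> q0) F" "(r \<longlongrightarrow> r0) F" "(s \<longlongrightarrow> s0) F"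
  shows "((\<lambda>x. mat2 (p x) (q x) (r x) (s x)) \<longlongrightarrow> mat2 p0 q0 r0 s0) F"
proof (rule vec_tendstoI, rule vec_tendstoI)
  fix i j :: 2
  show "((\<lambda>x. mat2 (p x) (q x) (r x) (s x) $ i $ j) \<longlongrightarrow> mat2 p0 q0 r0 s0 $ i $ j) F"
    using assms exhaust_2[of i] exhaust_2[of j] by auto
qed

lemma diag_mat_mult_nth: "(diag_mat d ** B) $ i $ j = d i * B $ i $ j"
  by (simp add: matrix_matrix_mult_def diag_mat_def if_distrib if_distribR cong: if_cong)

lemma mult_diag_mat_nth: "(B ** diag_mat d) $ i $ j = B $ i $ j * d j"
  by (simp add: matrix_matrix_mult_def diag_mat_def if_distrib if_distribR cong: if_cong)

lemma Xs_mult_2x2: "Xs (B::real^2^2) ** B =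
  mat2 (B$1$1 / (B$1$1 + B$1$2)) (B$1$2 / (B$1$1 + B$1$2))
       (B$2$1 / (B$2$1 + B$2$2)) (B$2$2 / (B$2$1 + B$2$2))"
  unfolding mat2_eq_iff Xs_def diag_mat_mult_nth row_sum_def sum_2 by simp

lemma mult_Ys_2x2: "(B::real^2^2) ** Ys B =
  mat2 (B$1$1 / (B$1$1 + B$2$1)) (B$1$2 / (B$1$2 + B$2$2))
       (B$2$1 / (B$1$1 + B$2$1)) (B$2$2 / (B$1$2 + B$2$2))"
  unfolding mat2_eq_iff Ys_def mult_diag_mat_nth col_sum_def sum_2 by simp

lemma doubly_stochastic_2x2_iff: "doubly_stochastic (B::real^2^2) \<longleftrightarrow>
   B$1$1 + B$1$2 = 1 \<and> B$2$1 + B$2$2 = 1 \<and> B$1$1 + B$2$1 = 1 \<and> B$1$2 + B$2$2 = 1"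
  unfolding doubly_stochastic_def row_sum_def col_sum_def sum_2 forall_2 by simp

lemma divide_add_divide_eq_1_iff:
  fixes p q r s :: real
  assumes "p + r > 0" "q + s > 0"
  shows "p / (p + r) + q / (q + s) = 1 \<longleftrightarrow> p * q = r * s"
  using assms mult_pos_pos[OF assms] by (auto simp: field_simps)

lemma doubly_stochastic_mult_Ys_2x2_iff:
  assumes "positive_matrix (A::real^2^2)"
  shows "doubly_stochastic (A ** Ys A) \<longleftrightarrow> A$1$1 * A$1$2 = A$2$1 * A$2$2"
proof -
  have pos: "A$1$1 + A$2$1 > 0" "A$1$2 + A$2$2 > 0"
    using assms unfolding positive_matrix_def by (simp_all add: add_pos_pos)
  then have "A$1$1 / (A$1$1 + A$2$1) + A$2$1 / (A$1$1 + A$2$1) = 1"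
    "A$1$2 / (A$1$2 + A$2$2) + A$2$2 / (A$1$2 + A$2$2) = 1"
    by (simp_all add: add_divide_distrib[symmetric])
  then show ?thesis
    unfolding doubly_stochastic_2x2_iff mult_Ys_2x2 mat2_nth
      divide_add_divide_eq_1_iff[OF pos, symmetric] by linarith
qed

lemma doubly_stochastic_Xs_mult_2x2_iff:
  assumes "positive_matrix (A::real^2^2)"
  shows "doubly_stochastic (Xs A ** A) \<longleftrightarrow> A$1$1 * A$2$1 = A$1$2 * A$2$2"
proof -
  have pos: "A$1$1 + A$1$2 > 0" "A$2$1 + A$2$2 > 0"
    using assms unfolding positive_matrix_def by (simp_all add: add_pos_pos)
  then have "A$1$1 / (A$1$1 + A$1$2) + A$1$2 / (A$1$1 + A$1$2) = 1"
    "A$2$1 / (A$2$1 + A$2$2) + A$2$2 / (A$2$1 + A$2$2) = 1"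
    by (simp_all add: add_divide_distrib[symmetric])
  then show ?thesis
    unfolding doubly_stochastic_2x2_iff Xs_mult_2x2 mat2_nth
      divide_add_divide_eq_1_iff[OF pos, symmetric] by linarith
qed

definition scale_step :: "real \<Rightarrow> real \<Rightarrow> real \<Rightarrow> real" where
  "scale_step a b r = (a + b * r) / (b + a * r)"

lemma scale_step_pos: "a > 0 \<Longrightarrow> b > 0 \<Longrightarrow> r > 0 \<Longrightarrow> scale_step a b r > 0"
  unfolding scale_step_def by (simp add: add_pos_pos)

lemma scale_step_iterate_pos: "a > 0 \<Longrightarrow> b > 0 \<Longrightarrow> r > 0 \<Longrightarrow> (scale_step a b ^^ n) r > 0"
  by (induction n) (simp_all add: scale_step_pos)

lemma scale_step_cayley:
  assumes "a > 0" "b > 0" "r > 0"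
  shows "(1 - scale_step a b r) / (1 + scale_step a b r) = (b - a) / (a + b) * ((1 - r) / (1 + r))"
proof -
  have pos: "b + a * r > 0" "(a + b) * (1 + r) > 0"
    using assms by (simp_all add: add_pos_pos)
  then have "1 - scale_step a b r = (b - a) * (1 - r) / (b + a * r)"
    "1 + scale_step a b r = (a + b) * (1 + r) / (b + a * r)"
    unfolding scale_step_def by (simp_all add: field_simps)
  then show ?thesis
    using pos by simp
qed

lemma scale_step_iterates_tendsto:
  assumes "a > 0" "b > 0" "r > 0"
  shows "(\<lambda>n. (scale_step a b ^^ n) r) \<longlonglongrightarrow> 1"
proof -
  define k where "k = (b - a) / (a + b)"
  define g where "g x = (1 - x) / (1 + x)" for x :: real
  have g_iterate: "g ((scale_step a b ^^ n) r) = k ^ n * g r" for n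
    using assms by (induction n) (simp_all add: g_def k_def scale_step_cayley scale_step_iterate_pos)
  have g_inverse: "x = (1 - g x) / (1 + g x)" if "x > 0" for x
    using that unfolding g_def by (simp add: field_simps)
  have "\<bar>k\<bar> < 1"
    using assms unfolding k_def by (simp add: abs_less_iff field_simps)
  then have "(\<lambda>n. (1 - k ^ n * g r) / (1 + k ^ n * g r)) \<longlonglongrightarrow> (1 - 0 * g r) / (1 + 0 * g r)"
    by (intro tendsto_intros LIMSEQ_power_zero) simp_all
  then show ?thesis
    using assms by (subst g_inverse) (simp_all add: g_iterate scale_step_iterate_pos)
qed

text \<open>\<open>diag(1,v) M diag(1,u)\<close>\<close>
definition diag_scaled :: "real \<Rightarrow> real \<Rightarrow> real \<Rightarrow> real \<Rightarrow> real^2^2" where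
  "diag_scaled a b u v = mat2 a (b * u) (b * v) (a * u * v)"

definition row_normal :: "real \<Rightarrow> real \<Rightarrow> real \<Rightarrow> real^2^2" where
  "row_normal a b u =
     mat2 (a / (a + b * u)) (b * u / (a + b * u)) (b / (b + a * u)) (a * u / (b + a * u))"

definition col_normal :: "real \<Rightarrow> real \<Rightarrow> real \<Rightarrow> real^2^2" where
  "col_normal a b v =
     mat2 (a / (a + b * v)) (b / (b + a * v)) (b * v / (a + b * v)) (a * v / (b + a * v))"

definition sym_ds2 :: "real \<Rightarrow> real \<Rightarrow> real^2^2" where
  "sym_ds2 a b = (\<chi> i j. if i = j then a / (a + b) else b / (a + b))"

lemma Xs_mult_diag_scaled:
  assumes "a > 0" "b > 0" "u > 0" "v > 0"
  shows "Xs (diag_scaled a b u v) ** diag_scaled a b u v = row_normal a b u"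
proof -
  have "a + b * u > 0" "b + a * u > 0" "b * v + a * u * v > 0"
    using assms by (simp_all add: add_pos_pos)
  then show ?thesis using assms
    unfolding Xs_mult_2x2 diag_scaled_def row_normal_def mat2_eq_iff mat2_nth
    by (simp add: field_simps)
qed

lemma diag_scaled_mult_Ys:
  assumes "a > 0" "b > 0" "u > 0" "v > 0"
  shows "diag_scaled a b u v ** Ys (diag_scaled a b u v) = col_normal a b v"
proof -
  have "a + b * v > 0" "b + a * v > 0" "b * u + a * u * v > 0"
    using assms by (simp_all add: add_pos_pos)
  then show ?thesis using assms
    unfolding mult_Ys_2x2 diag_scaled_def col_normal_def mat2_eq_iff mat2_nth
    by (simp add: field_simps)
qed

lemma row_normal_eq_diag_scaled:
  assumes "a > 0" "b > 0" "u > 0"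
  shows "row_normal a b u = diag_scaled (a / (a + b * u)) (b / (a + b * u)) u (scale_step a b u)"
proof -
  have "a + b * u > 0" "b + a * u > 0" "(a + b * u) * (b + a * u) > 0"
    using assms by (simp_all add: add_pos_pos)
  then show ?thesis
    unfolding diag_scaled_def row_normal_def scale_step_def mat2_eq_iff mat2_nth
    by (simp add: field_simps)
qed

lemma col_normal_eq_diag_scaled:
  assumes "a > 0" "b > 0" "v > 0"
  shows "col_normal a b v = diag_scaled (a / (a + b * v)) (b / (a + b * v)) (scale_step a b v) v"
proof -
  have "a + b * v > 0" "b + a * v > 0" "(a + b * v) * (b + a * v) > 0"
    using assms by (simp_all add: add_pos_pos)
  then show ?thesis
    unfolding diag_scaled_def col_normal_def scale_step_def mat2_eq_iff mat2_nth
    by (simp add: field_simps)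
qed

lemma row_normal_divide: "c > 0 \<Longrightarrow> row_normal (a / c) (b / c) u = row_normal a b u"
  unfolding row_normal_def by (simp add: field_simps)

lemma col_normal_divide: "c > 0 \<Longrightarrow> col_normal (a / c) (b / c) v = col_normal a b v"
  unfolding col_normal_def by (simp add: field_simps)

lemma Xs_mult_col_normal:
  assumes "a > 0" "b > 0" "v > 0"
  shows "Xs (col_normal a b v) ** col_normal a b v = row_normal a b (scale_step a b v)"
proof -
  have "a + b * v > 0" "scale_step a b v > 0"
    using assms by (simp_all add: add_pos_pos scale_step_pos)
  then show ?thesis
    using assms by (simp add: col_normal_eq_diag_scaled Xs_mult_diag_scaled row_normal_divide)
qed

lemma row_normal_mult_Ys:
  assumes "a > 0" "b > 0" "u > 0"
  shows "row_normal a b u ** Ys (row_normal a b u) = col_normal a b (scale_step a b u)"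
proof -
  have "a + b * u > 0" "scale_step a b u > 0"
    using assms by (simp_all add: add_pos_pos scale_step_pos)
  then show ?thesis
    using assms by (simp add: row_normal_eq_diag_scaled diag_scaled_mult_Ys col_normal_divide)
qed

lemma alt_min_seq_diag_scaled:
  assumes "a > 0" "b > 0" "u > 0" "v > 0"
  shows "alt_min_seq (diag_scaled a b u v) (Suc n) =
    (if even n then col_normal a b ((scale_step a b ^^ n) v)
     else row_normal a b ((scale_step a b ^^ n) v))"
proof (induction n)
  case 0
  show ?case using assms by (simp add: diag_scaled_mult_Ys)
next
  case (Suc n)
  have "(scale_step a b ^^ n) v > 0"
    using assms by (simp add: scale_step_iterate_pos)
  then show ?case
    using Suc assms by (simp add: Let_def Xs_mult_col_normal row_normal_mult_Ys)
qed

lemma row_normal_1: "row_normal a b 1 = sym_ds2 a b"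
  unfolding row_normal_def sym_ds2_def mat2_eq_iff by (simp add: add.commute)

lemma col_normal_1: "col_normal a b 1 = sym_ds2 a b"
  unfolding col_normal_def sym_ds2_def mat2_eq_iff by (simp add: add.commute)

lemma tendsto_row_normal:
  assumes "a > 0" "b > 0" "(f \<longlongrightarrow> 1) F"
  shows "((\<lambda>x. row_normal a b (f x)) \<longlongrightarrow> sym_ds2 a b) F"
  unfolding row_normal_1[symmetric] row_normal_def using assms
  by (intro tendsto_mat2 tendsto_intros) (simp_all add: add_pos_pos)

lemma tendsto_col_normal:
  assumes "a > 0" "b > 0" "(f \<longlongrightarrow> 1) F"
  shows "((\<lambda>x. col_normal a b (f x)) \<longlongrightarrow> sym_ds2 a b) F"
  unfolding col_normal_1[symmetric] col_normal_def using assms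
  by (intro tendsto_mat2 tendsto_intros) (simp_all add: add_pos_pos)

lemma alt_min_seq_diag_scaled_tendsto:
  assumes "a > 0" "b > 0" "u > 0" "v > 0"
  shows "alt_min_seq (diag_scaled a b u v) \<longlonglongrightarrow> sym_ds2 a b"
proof -
  have r: "(\<lambda>n. (scale_step a b ^^ n) v) \<longlonglongrightarrow> 1"
    using assms by (simp add: scale_step_iterates_tendsto)
  have "(\<lambda>n. alt_min_seq (diag_scaled a b u v) (Suc n)) \<longlonglongrightarrow> sym_ds2 a b"
    unfolding alt_min_seq_diag_scaled[OF assms]
    by (intro filterlim_If tendsto_mono[OF inf_le1] tendsto_col_normal tendsto_row_normal r assms)
  then show ?thesis
    by (rule LIMSEQ_imp_Suc)
qed

lemma sinkhorn_limit_if_mult_Ys_doubly_stochastic: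
  fixes A :: "real^2^2"
  assumes pos: "positive_matrix A" and ds: "doubly_stochastic (A ** Ys A)"
  shows "\<exists>a c t. a > 0 \<and> c > 0 \<and> t > 0 \<and>
           A $ 1 $ 1 = a \<and> A $ 1 $ 2 = c * t \<and> A $ 2 $ 1 = c \<and> A $ 2 $ 2 = a * t \<and>
           alt_min_seq A \<longlonglongrightarrow> A ** Ys A \<and>
           sinkhorn_limit A = A ** Ys A \<and>
           A ** Ys A = (\<chi> i j. if i = j then a / (a + c) else c / (a + c))"
proof -
  define a c t where "a = A$1$1" and "c = A$2$1" and "t = A$1$2 / A$2$1"
  have a: "a > 0" and c: "c > 0" and t: "t > 0"
    using pos unfolding positive_matrix_def a_def c_def t_def by simp_all
  have "A$1$1 * A$1$2 = A$2$1 * A$2$2"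
    using ds doubly_stochastic_mult_Ys_2x2_iff[OF pos] by simp
  then have A: "A = diag_scaled a c t 1"
    using c unfolding diag_scaled_def mat2_eq_iff a_def c_def t_def by (simp add: field_simps)
  have scaled: "A ** Ys A = sym_ds2 a c"
    unfolding A using a c t by (simp add: diag_scaled_mult_Ys col_normal_1)
  have "alt_min_seq A \<longlonglongrightarrow> sym_ds2 a c"
    unfolding A using a c t by (simp add: alt_min_seq_diag_scaled_tendsto)
  then have lim: "alt_min_seq A \<longlonglongrightarrow> A ** Ys A"
    unfolding scaled .
  show ?thesis
    using a c t A lim limI[OF lim] scaled
    unfolding sinkhorn_limit_def sym_ds2_def diag_scaled_def by auto
qed

lemma sinkhorn_limit_if_Xs_mult_doubly_stochastic:
  fixes A :: "real^2^2"
  assumes pos: "positive_matrix A" and ds: "doubly_stochastic (Xs A ** A)"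
  shows "\<exists>a b t. a > 0 \<and> b > 0 \<and> t > 0 \<and>
           A $ 1 $ 1 = a \<and> A $ 1 $ 2 = b \<and> A $ 2 $ 1 = b * t \<and> A $ 2 $ 2 = a * t \<and>
           alt_min_seq A \<longlonglongrightarrow> Xs A ** A \<and>
           sinkhorn_limit A = Xs A ** A \<and>
           Xs A ** A = (\<chi> i j. if i = j then a / (a + b) else b / (a + b))"
proof -
  define a b t where "a = A$1$1" and "b = A$1$2" and "t = A$2$1 / A$1$2"
  have a: "a > 0" and b: "b > 0" and t: "t > 0"
    using pos unfolding positive_matrix_def a_def b_def t_def by simp_all
  have "A$1$1 * A$2$1 = A$1$2 * A$2$2"
    using ds doubly_stochastic_Xs_mult_2x2_iff[OF pos] by simp
  then have A: "A = diag_scaled a b 1 t"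
    using b unfolding diag_scaled_def mat2_eq_iff a_def b_def t_def by (simp add: field_simps)
  have scaled: "Xs A ** A = sym_ds2 a b"
    unfolding A using a b t by (simp add: Xs_mult_diag_scaled row_normal_1)
  have "alt_min_seq A \<longlonglongrightarrow> sym_ds2 a b"
    unfolding A using a b t by (simp add: alt_min_seq_diag_scaled_tendsto)
  then have lim: "alt_min_seq A \<longlonglongrightarrow> Xs A ** A"
    unfolding scaled .
  show ?thesis
    using a b t A lim limI[OF lim] scaled
    unfolding sinkhorn_limit_def sym_ds2_def diag_scaled_def by auto
qed

theorem theorem7:
  fixes A :: "real^2^2"
  assumes pos: "positive_matrix A"
    and nds: "\<not> doubly_stochastic A"
  shows "(doubly_stochastic (A ** Ys A) \<longrightarrow>
            (\<exists>a c t. a > 0 \<and> c > 0 \<and> t > 0 \<and>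
               A $ 1 $ 1 = a \<and> A $ 1 $ 2 = c * t \<and> A $ 2 $ 1 = c \<and> A $ 2 $ 2 = a * t \<and>
               alt_min_seq A \<longlonglongrightarrow> A ** Ys A \<and>
               sinkhorn_limit A = A ** Ys A \<and>
               A ** Ys A = (\<chi> i j. if i = j then a / (a + c) else c / (a + c))))
       \<and> (doubly_stochastic (Xs A ** A) \<longrightarrow>
            (\<exists>a b t. a > 0 \<and> b > 0 \<and> t > 0 \<and>
               A $ 1 $ 1 = a \<and> A $ 1 $ 2 = b \<and> A $ 2 $ 1 = b * t \<and> A $ 2 $ 2 = a * t \<and>
               alt_min_seq A \<longlonglongrightarrow> Xs A ** A \<and>
               sinkhorn_limit A = Xs A ** A \<and>
               Xs A ** A = (\<chi> i j. if i = j then a / (a + b) else b / (a + b))))"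
  using sinkhorn_limit_if_mult_Ys_doubly_stochastic[OF pos]
    sinkhorn_limit_if_Xs_mult_doubly_stochastic[OF pos] by blast

end
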